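(* Let $\Gamma$ be the directed union of a directed family of subgroups $(\Gamma_i)_{i\in I}$, each of which is $2$-boundedly acyclic. Then $\Gamma$ is $2$-boundedly acyclic.
   Context: A group $G$ is $2$-boundedly acyclic if $\operatorname{H}^1_b(G;\mathbb{R}) \cong 0$ and $\operatorname{H}^2_b(G;\mathbb{R}) \cong 0$, where $\operatorname{H}^*_b(\cdot;\mathbb{R})$ is bounded cohomology with trivial real coefficients. *)

theory Defs
  imports Complex_Main "HOL-Algebra.Group"
begin

text \<open>Bounded cohomology with trivial real coefficients via the inhomogeneous
  bar resolution.\<close>

definition tuples :: "('a, 'b) monoid_scheme \<Rightarrow> nat \<Rightarrow> 'a list set" where
  "tuples G n = {xs. length xs = n \<and> set xs \<subseteq> carrier G}"

definition bounded_cochain :: "('a, 'b) monoid_scheme \<Rightarrow> nat \<Rightarrow> ('a list \<Rightarrow> real) \<Rightarrow> bool" where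
  "bounded_cochain G n f \<longleftrightarrow> (\<exists>C. \<forall>xs\<in>tuples G n. \<bar>f xs\<bar> \<le> C)"

text \<open>Coboundary of an n-cochain, evaluated at an (n+1)-tuple:
  (df)(g_1..g_{n+1}) = f(g_2..g_{n+1}) + sum_{i=1}^n (-1)^i f(..,g_i g_{i+1},..)
                       + (-1)^{n+1} f(g_1..g_n).\<close>
definition coboundary :: "('a, 'b) monoid_scheme \<Rightarrow> nat \<Rightarrow> ('a list \<Rightarrow> real) \<Rightarrow> 'a list \<Rightarrow> real" where
  "coboundary G n f xs =
     f (tl xs)
     + (\<Sum>i<n. (-1) ^ (i + 1) * f (take i xs @ [xs ! i \<otimes>\<^bsub>G\<^esub> xs ! (i + 1)] @ drop (i + 2) xs))
     + (-1) ^ (n + 1) * f (butlast xs)"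

text \<open>H^n_b(G;R) = 0 (for n >= 1): every bounded n-cocycle is the coboundary of a
  bounded (n-1)-cochain.\<close>
definition bcohom_vanishes :: "('a, 'b) monoid_scheme \<Rightarrow> nat \<Rightarrow> bool" where
  "bcohom_vanishes G n \<longleftrightarrow>
     (\<forall>f. bounded_cochain G n f \<and> (\<forall>xs\<in>tuples G (n + 1). coboundary G n f xs = 0)
        \<longrightarrow> (\<exists>g. bounded_cochain G (n - 1) g \<and>
                 (\<forall>xs\<in>tuples G n. f xs = coboundary G (n - 1) g xs)))"

definition two_boundedly_acyclic :: "('a, 'b) monoid_scheme \<Rightarrow> bool" where
  "two_boundedly_acyclic G \<longleftrightarrow> bcohom_vanishes G 1 \<and> bcohom_vanishes G 2"

end

theory Submission
  imports Defs
begin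

text \<open>A bounded 1-cocycle is a bounded homomorphism to \<open>\<real>\<close>, and the vanishing of all of
  them is a pointwise condition, inherited from any cover by subgroups. For a bounded 2-cocycle
  \<open>f\<close>, a bounded primitive \<open>g\<close> on a subgroup is a quasimorphism of defect at most \<open>\<parallel>f\<parallel>\<close>; being
  bounded, it is itself bounded by \<open>\<parallel>f\<parallel>\<close>, and any two bounded primitives differ by a bounded
  homomorphism, hence agree. So the primitives on the members of a directed family are
  compatible and uniformly bounded, and they glue to a bounded primitive on the union.\<close>

lemma bounded_quasimorphism_abs_le_defect:
  fixes \<phi> :: "'a \<Rightarrow> real"
  assumes closed: "\<And>a b. a \<in> S \<Longrightarrow> b \<in> S \<Longrightarrow> m a b \<in> S"
    and defect: "\<And>a b. a \<in> S \<Longrightarrow> b \<in> S \<Longrightarrow> \<bar>\<phi> (m a b) - \<phi> a - \<phi> b\<bar> \<le> C"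
    and bounded: "\<And>y. y \<in> S \<Longrightarrow> \<bar>\<phi> y\<bar> \<le> B"
    and x: "x \<in> S"
  shows "\<bar>\<phi> x\<bar> \<le> C"
proof (rule ccontr)
  assume "\<not> \<bar>\<phi> x\<bar> \<le> C"
  then obtain n where n: "B < real n * (\<bar>\<phi> x\<bar> - C)"
    using ex_less_of_nat_mult[of "\<bar>\<phi> x\<bar> - C" B] by auto
  define power where "power k = ((\<lambda>y. m y x) ^^ k) x" for k
  have power_in: "power k \<in> S" for k
    by (induction k) (auto simp: power_def x closed)
  have drift: "\<bar>\<phi> (power k) - real (Suc k) * \<phi> x\<bar> \<le> real k * C" for k
  proof (induction k)
    case (Suc k)
    have "\<bar>\<phi> (m (power k) x) - \<phi> (power k) - \<phi> x\<bar> \<le> C"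
      using defect power_in x by blast
    with Suc.IH show ?case
      by (simp add: power_def algebra_simps)
  qed (simp add: power_def)
  have "real n * \<bar>\<phi> x\<bar> \<le> real (Suc n) * \<bar>\<phi> x\<bar>"
    by (simp add: mult_right_mono)
  also have "\<dots> \<le> \<bar>\<phi> (power n)\<bar> + real n * C"
    using drift[of n] by (simp add: abs_mult)
  also have "\<dots> \<le> B + real n * C"
    using bounded power_in by simp
  finally show False
    using n by (simp add: algebra_simps)
qed

definition cocycle :: "('a, 'b) monoid_scheme \<Rightarrow> nat \<Rightarrow> ('a list \<Rightarrow> real) \<Rightarrow> bool" where
  "cocycle G n f \<longleftrightarrow> (\<forall>xs\<in>tuples G (n + 1). coboundary G n f xs = 0)"

definition bounded_primitive_on ::
    "('a, 'b) monoid_scheme \<Rightarrow> 'a set \<Rightarrow> ('a list \<Rightarrow> real) \<Rightarrow> ('a list \<Rightarrow> real) \<Rightarrow> bool" where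
  "bounded_primitive_on G S f g \<longleftrightarrow>
     (\<exists>B. \<forall>x\<in>S. \<bar>g [x]\<bar> \<le> B) \<and> (\<forall>a\<in>S. \<forall>b\<in>S. f [a, b] = g [b] - g [a \<otimes>\<^bsub>G\<^esub> b] + g [a])"

lemma tuples_1: "tuples G 1 = (\<lambda>x. [x]) ` carrier G"
  by (auto simp: tuples_def length_Suc_conv)

lemma tuples_2: "tuples G 2 = (\<lambda>(a, b). [a, b]) ` (carrier G \<times> carrier G)"
  by (auto simp: tuples_def length_Suc_conv numeral_2_eq_2)

lemma coboundary_0_singleton [simp]: "coboundary G 0 g [x] = 0"
  by (simp add: coboundary_def)

lemma coboundary_1_pair [simp]: "coboundary G (Suc 0) g [a, b] = g [b] - g [a \<otimes>\<^bsub>G\<^esub> b] + g [a]"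
  by (simp add: coboundary_def)

lemma bounded_cochain_1_iff: "bounded_cochain G 1 g \<longleftrightarrow> (\<exists>B. \<forall>x\<in>carrier G. \<bar>g [x]\<bar> \<le> B)"
  unfolding bounded_cochain_def tuples_1 by simp

lemma bounded_cochain_2_iff:
  "bounded_cochain G 2 f \<longleftrightarrow> (\<exists>C. \<forall>a\<in>carrier G. \<forall>b\<in>carrier G. \<bar>f [a, b]\<bar> \<le> C)"
  by (simp add: bounded_cochain_def tuples_2)

lemma bcohom_vanishes_1_iff:
  "bcohom_vanishes G 1 \<longleftrightarrow>
     (\<forall>f. bounded_cochain G 1 f \<and> cocycle G 1 f \<longrightarrow> (\<forall>x\<in>carrier G. f [x] = 0))"
  unfolding bcohom_vanishes_def cocycle_def bounded_cochain_def tuples_1 by auto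

lemma bcohom_vanishes_2_iff:
  "bcohom_vanishes G 2 \<longleftrightarrow>
     (\<forall>f. bounded_cochain G 2 f \<and> cocycle G 2 f \<longrightarrow> (\<exists>g. bounded_primitive_on G (carrier G) f g))"
  unfolding bcohom_vanishes_def cocycle_def bounded_primitive_on_def tuples_2
    bounded_cochain_1_iff[symmetric] by simp

lemma bounded_primitive_on_mono:
  "bounded_primitive_on G S f g \<Longrightarrow> T \<subseteq> S \<Longrightarrow> bounded_primitive_on G T f g"
  unfolding bounded_primitive_on_def by blast

lemma bounded_primitive_on_abs_le:
  assumes closed: "\<And>a b. a \<in> S \<Longrightarrow> b \<in> S \<Longrightarrow> a \<otimes>\<^bsub>G\<^esub> b \<in> S"
    and f_bound: "\<And>a b. a \<in> S \<Longrightarrow> b \<in> S \<Longrightarrow> \<bar>f [a, b]\<bar> \<le> C"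
    and g: "bounded_primitive_on G S f g"
    and x: "x \<in> S"
  shows "\<bar>g [x]\<bar> \<le> C"
proof -
  from g obtain B where B: "\<forall>y\<in>S. \<bar>g [y]\<bar> \<le> B" and primitive:
    "\<forall>a\<in>S. \<forall>b\<in>S. f [a, b] = g [b] - g [a \<otimes>\<^bsub>G\<^esub> b] + g [a]"
    by (auto simp: bounded_primitive_on_def)
  show ?thesis
  proof (rule bounded_quasimorphism_abs_le_defect[where m = "\<lambda>a b. a \<otimes>\<^bsub>G\<^esub> b" and B = B])
    fix a b assume "a \<in> S" "b \<in> S"
    then show "\<bar>g [a \<otimes>\<^bsub>G\<^esub> b] - g [a] - g [b]\<bar> \<le> C"
      using primitive f_bound[of a b] by auto
  qed (use closed B x in auto)
qed

lemma bounded_primitive_on_unique: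
  assumes closed: "\<And>a b. a \<in> S \<Longrightarrow> b \<in> S \<Longrightarrow> a \<otimes>\<^bsub>G\<^esub> b \<in> S"
    and g: "bounded_primitive_on G S f g"
    and h: "bounded_primitive_on G S f h"
    and x: "x \<in> S"
  shows "g [x] = h [x]"
proof -
  from g obtain Bg where Bg: "\<forall>y\<in>S. \<bar>g [y]\<bar> \<le> Bg" and g_primitive:
    "\<forall>a\<in>S. \<forall>b\<in>S. f [a, b] = g [b] - g [a \<otimes>\<^bsub>G\<^esub> b] + g [a]"
    by (auto simp: bounded_primitive_on_def)
  from h obtain Bh where Bh: "\<forall>y\<in>S. \<bar>h [y]\<bar> \<le> Bh" and h_primitive:
    "\<forall>a\<in>S. \<forall>b\<in>S. f [a, b] = h [b] - h [a \<otimes>\<^bsub>G\<^esub> b] + h [a]"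
    by (auto simp: bounded_primitive_on_def)
  have "\<bar>g [x] - h [x]\<bar> \<le> 0"
  proof (rule bounded_quasimorphism_abs_le_defect[where m = "\<lambda>a b. a \<otimes>\<^bsub>G\<^esub> b" and B = "Bg + Bh"])
    fix a b assume "a \<in> S" "b \<in> S"
    then have "f [a, b] = g [b] - g [a \<otimes>\<^bsub>G\<^esub> b] + g [a]" "f [a, b] = h [b] - h [a \<otimes>\<^bsub>G\<^esub> b] + h [a]"
      using g_primitive h_primitive by auto
    then show "\<bar>(g [a \<otimes>\<^bsub>G\<^esub> b] - h [a \<otimes>\<^bsub>G\<^esub> b]) - (g [a] - h [a]) - (g [b] - h [b])\<bar> \<le> 0"
      by simp
  next
    fix y assume "y \<in> S"
    then show "\<bar>g [y] - h [y]\<bar> \<le> Bg + Bh"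
      using Bg Bh by (smt (verit))
  qed (use closed x in auto)
  then show ?thesis by simp
qed

lemma coboundary_carrier_update [simp]: "coboundary (G\<lparr>carrier := S\<rparr>) n f = coboundary G n f"
  by (simp add: coboundary_def fun_eq_iff)

lemma tuples_carrier_update_subset:
  "S \<subseteq> carrier G \<Longrightarrow> tuples (G\<lparr>carrier := S\<rparr>) n \<subseteq> tuples G n"
  by (auto simp: tuples_def)

lemma bounded_cochain_restrict:
  "S \<subseteq> carrier G \<Longrightarrow> bounded_cochain G n f \<Longrightarrow> bounded_cochain (G\<lparr>carrier := S\<rparr>) n f"
  unfolding bounded_cochain_def using tuples_carrier_update_subset by blast

lemma cocycle_restrict:
  "S \<subseteq> carrier G \<Longrightarrow> cocycle G n f \<Longrightarrow> cocycle (G\<lparr>carrier := S\<rparr>) n f"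
  unfolding cocycle_def using tuples_carrier_update_subset by fastforce

lemma bounded_primitive_on_carrier_update [simp]:
  "bounded_primitive_on (G\<lparr>carrier := T\<rparr>) S f g = bounded_primitive_on G S f g"
  by (simp add: bounded_primitive_on_def)

lemma bcohom_vanishes_1_of_cover:
  assumes "\<And>x. x \<in> carrier G \<Longrightarrow>
             \<exists>S. x \<in> S \<and> S \<subseteq> carrier G \<and> bcohom_vanishes (G\<lparr>carrier := S\<rparr>) 1"
  shows "bcohom_vanishes G 1"
  unfolding bcohom_vanishes_1_iff
proof (intro allI impI ballI)
  fix f x
  assume f: "bounded_cochain G 1 f \<and> cocycle G 1 f" and "x \<in> carrier G"
  then obtain S where "x \<in> S" "S \<subseteq> carrier G" "bcohom_vanishes (G\<lparr>carrier := S\<rparr>) 1"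
    using assms by blast
  with f show "f [x] = 0"
    using bounded_cochain_restrict cocycle_restrict unfolding bcohom_vanishes_1_iff by fastforce
qed

lemma bcohom_vanishes_2_directed_union:
  assumes subset: "\<And>i. i \<in> I \<Longrightarrow> H i \<subseteq> carrier G"
    and closed: "\<And>i a b. i \<in> I \<Longrightarrow> a \<in> H i \<Longrightarrow> b \<in> H i \<Longrightarrow> a \<otimes>\<^bsub>G\<^esub> b \<in> H i"
    and directed: "\<And>i j. i \<in> I \<Longrightarrow> j \<in> I \<Longrightarrow> \<exists>k\<in>I. H i \<subseteq> H k \<and> H j \<subseteq> H k"
    and union: "carrier G = (\<Union>i\<in>I. H i)"
    and vanishes: "\<And>i. i \<in> I \<Longrightarrow> bcohom_vanishes (G\<lparr>carrier := H i\<rparr>) 2"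
  shows "bcohom_vanishes G 2"
  unfolding bcohom_vanishes_2_iff
proof (intro allI impI)
  fix f
  assume f: "bounded_cochain G 2 f \<and> cocycle G 2 f"
  then obtain C where C: "\<forall>a\<in>carrier G. \<forall>b\<in>carrier G. \<bar>f [a, b]\<bar> \<le> C"
    by (auto simp: bounded_cochain_2_iff)
  have "\<exists>g. bounded_primitive_on G (H i) f g" if "i \<in> I" for i
    using vanishes[OF that] f bounded_cochain_restrict[OF subset] cocycle_restrict[OF subset] that
    unfolding bcohom_vanishes_2_iff by fastforce
  then obtain g where g: "\<And>i. i \<in> I \<Longrightarrow> bounded_primitive_on G (H i) f (g i)"
    by metis
  have g_bound: "\<bar>g i [x]\<bar> \<le> C" if "i \<in> I" "x \<in> H i" for i x
    by (rule bounded_primitive_on_abs_le[OF closed[OF that(1)] _ g[OF that(1)] that(2)])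
      (use C subset[OF that(1)] in auto)
  have g_compatible: "g i [x] = g j [x]"
    if ij: "i \<in> I" "j \<in> I" and x: "x \<in> H i" "x \<in> H j" for i j x
  proof -
    obtain k where k: "k \<in> I" "H i \<subseteq> H k" "H j \<subseteq> H k"
      using directed ij by blast
    have "g i [x] = g k [x]"
      using bounded_primitive_on_unique[OF closed g bounded_primitive_on_mono[OF g k(2)]] ij k x
      by blast
    also have "\<dots> = g j [x]"
      using bounded_primitive_on_unique[OF closed g bounded_primitive_on_mono[OF g k(3)]] ij k x
      by metis
    finally show ?thesis .
  qed
  obtain index where index: "\<And>x. x \<in> carrier G \<Longrightarrow> index x \<in> I \<and> x \<in> H (index x)"
    using union by (metis UN_E)
  define g_glued where "g_glued xs = g (index (hd xs)) xs" for xs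
  have g_glued: "g_glued [x] = g i [x]" if "i \<in> I" "x \<in> H i" for i x
    using g_compatible index subset that unfolding g_glued_def by (metis list.sel(1) subsetD)
  show "\<exists>g. bounded_primitive_on G (carrier G) f g"
  proof (intro exI conjI)
    show "bounded_primitive_on G (carrier G) f g_glued"
      unfolding bounded_primitive_on_def
    proof (intro conjI exI ballI)
      fix x assume "x \<in> carrier G"
      then show "\<bar>g_glued [x]\<bar> \<le> C"
        using g_bound g_glued index by metis
    next
      fix a b assume "a \<in> carrier G" "b \<in> carrier G"
      then obtain k where k: "k \<in> I" "a \<in> H k" "b \<in> H k"
        using directed[of "index a" "index b"] index by blast
      then have "f [a, b] = g k [b] - g k [a \<otimes>\<^bsub>G\<^esub> b] + g k [a]"
        using g unfolding bounded_primitive_on_def by blast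
      moreover have "g_glued [a] = g k [a]" "g_glued [b] = g k [b]"
        "g_glued [a \<otimes>\<^bsub>G\<^esub> b] = g k [a \<otimes>\<^bsub>G\<^esub> b]"
        using g_glued[OF k(1)] closed[OF k] k(2,3) by blast+
      ultimately show "f [a, b] = g_glued [b] - g_glued [a \<otimes>\<^bsub>G\<^esub> b] + g_glued [a]"
        by simp
    qed
  qed
qed

theorem corollary4p16:
  fixes \<Gamma> :: "('a, 'b) monoid_scheme" and I :: "'i set" and H :: "'i \<Rightarrow> 'a set"
  assumes "group \<Gamma>"
    and "\<And>i. i \<in> I \<Longrightarrow> subgroup (H i) \<Gamma>"
    and "I \<noteq> {}"
    and "\<And>i j. i \<in> I \<Longrightarrow> j \<in> I \<Longrightarrow> \<exists>k\<in>I. H i \<subseteq> H k \<and> H j \<subseteq> H k"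
    and "carrier \<Gamma> = (\<Union>i\<in>I. H i)"
    and "\<And>i. i \<in> I \<Longrightarrow> two_boundedly_acyclic (\<Gamma>\<lparr>carrier := H i\<rparr>)"
  shows "two_boundedly_acyclic \<Gamma>"
proof -
  have subset: "\<And>i. i \<in> I \<Longrightarrow> H i \<subseteq> carrier \<Gamma>"
    using assms(2) subgroup.subset by blast
  have "bcohom_vanishes \<Gamma> 1"
    by (rule bcohom_vanishes_1_of_cover)
      (use assms(5,6) subset in \<open>auto simp: two_boundedly_acyclic_def\<close>)
  moreover have "bcohom_vanishes \<Gamma> 2"
    by (rule bcohom_vanishes_2_directed_union[OF subset _ assms(4,5)])
      (use assms(2,6) in \<open>auto simp: two_boundedly_acyclic_def intro: subgroup.m_closed\<close>)
  ultimately show ?thesis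
    by (simp add: two_boundedly_acyclic_def)
qed

end
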